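(* If $G$ is a graph with no isolated vertices and total domination number $\gamma_t(G) = 3$, then $\gamma_{\rm gr}^t(G) > 3$.
   Context: All graphs are finite, simple, without isolated vertices. $\gamma_t(G)$ is the minimum size of a set $D$ of vertices such that every vertex of $G$ has a neighbor in $D$. $N(v)$ denotes the open neighborhood of $v$. A sequence $S=(v_1,\ldots,v_k)$ of distinct vertices of $G$ is a legal (open neighborhood) sequence if $N(v_i)\setminus \bigcup_{j=1}^{i-1} N(v_j)\neq\emptyset$ for every $i\in\{2,\ldots,k\}$. It is a total dominating sequence if moreover the set $\{v_1,\ldots,v_k\}$ is a total dominating set of $G$. The Grundy total domination number $\gamma_{\rm gr}^t(G)$ is the maximum length of a total dominating sequence of $G$. *)

theory Defs
  imports Main
begin

definition graph :: "'a set \<Rightarrow> ('a \<Rightarrow> 'a \<Rightarrow> bool) \<Rightarrow> bool" where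
  "graph V E \<longleftrightarrow> finite V \<and> (\<forall>u v. E u v \<longrightarrow> E v u) \<and> (\<forall>v. \<not> E v v)
     \<and> (\<forall>u v. E u v \<longrightarrow> u \<in> V \<and> v \<in> V)"

definition no_isolated :: "'a set \<Rightarrow> ('a \<Rightarrow> 'a \<Rightarrow> bool) \<Rightarrow> bool" where
  "no_isolated V E \<longleftrightarrow> (\<forall>v\<in>V. \<exists>u. E v u)"

definition nbhd :: "('a \<Rightarrow> 'a \<Rightarrow> bool) \<Rightarrow> 'a \<Rightarrow> 'a set" where
  "nbhd E v = {u. E v u}"

definition total_dominating_set :: "'a set \<Rightarrow> ('a \<Rightarrow> 'a \<Rightarrow> bool) \<Rightarrow> 'a set \<Rightarrow> bool" where
  "total_dominating_set V E D \<longleftrightarrow> D \<subseteq> V \<and> (\<forall>v\<in>V. \<exists>d\<in>D. E v d)"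

definition total_domination_number :: "'a set \<Rightarrow> ('a \<Rightarrow> 'a \<Rightarrow> bool) \<Rightarrow> nat" where
  "total_domination_number V E = (LEAST k. \<exists>D. total_dominating_set V E D \<and> card D = k)"

definition legal_sequence :: "'a set \<Rightarrow> ('a \<Rightarrow> 'a \<Rightarrow> bool) \<Rightarrow> 'a list \<Rightarrow> bool" where
  "legal_sequence V E S \<longleftrightarrow> set S \<subseteq> V \<and> distinct S \<and>
     (\<forall>i. 0 < i \<and> i < length S \<longrightarrow>
        nbhd E (S ! i) - (\<Union>j<i. nbhd E (S ! j)) \<noteq> {})"

definition total_dominating_sequence :: "'a set \<Rightarrow> ('a \<Rightarrow> 'a \<Rightarrow> bool) \<Rightarrow> 'a list \<Rightarrow> bool" where
  "total_dominating_sequence V E S \<longleftrightarrow>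
     legal_sequence V E S \<and> total_dominating_set V E (set S)"

definition grundy_total_domination_number :: "'a set \<Rightarrow> ('a \<Rightarrow> 'a \<Rightarrow> bool) \<Rightarrow> nat" where
  "grundy_total_domination_number V E =
     (GREATEST k. \<exists>S. total_dominating_sequence V E S \<and> length S = k)"

end

theory Submission
  imports Defs
begin

text \<open>Let \<open>{a, b, c}\<close> be a minimum total dominating set. Since \<open>{b, c}\<close> is not
  total dominating, some \<open>q\<close> is adjacent to \<open>a\<close> but to neither \<open>b\<close> nor \<open>c\<close>; since
  \<open>{a, q}\<close> is not total dominating, some \<open>r\<close> is adjacent to neither \<open>a\<close> nor \<open>q\<close>,
  hence to \<open>b\<close> or \<open>c\<close>. Then \<open>q, r, a, y\<close> with \<open>y\<close> any neighbour of \<open>r\<close> is a legal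
  sequence (with footprints a neighbour of \<open>r\<close> in \<open>{b, c}\<close>, then \<open>q\<close>, then \<open>r\<close>),
  and every legal sequence extends greedily to a total dominating sequence.\<close>

lemma legal_sequence_snoc:
  assumes legal: "legal_sequence V E S" and "y \<in> V" "w \<in> nbhd E y"
    and footprint: "w \<notin> (\<Union>x\<in>set S. nbhd E x)"
  shows "legal_sequence V E (S @ [y])"
  unfolding legal_sequence_def
proof (intro conjI allI impI)
  have prefix: "(\<Union>j<i. nbhd E ((S @ [y]) ! j)) = (\<Union>j<i. nbhd E (S ! j))"
    if "i \<le> length S" for i
    using that by (auto simp: nth_append)
  have "y \<notin> set S" using assms(3) footprint by blast
  then show "set (S @ [y]) \<subseteq> V" "distinct (S @ [y])"
    using legal assms(2) by (auto simp: legal_sequence_def)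
  fix i assume i: "0 < i \<and> i < length (S @ [y])"
  show "nbhd E ((S @ [y]) ! i) - (\<Union>j<i. nbhd E ((S @ [y]) ! j)) \<noteq> {}"
  proof (cases "i < length S")
    case True
    then show ?thesis using prefix[of i] i legal by (auto simp: legal_sequence_def nth_append)
  next
    case False
    then have "i = length S" using i by simp
    moreover have "(\<Union>j<length S. nbhd E (S ! j)) = (\<Union>x\<in>set S. nbhd E x)"
      by (force simp: in_set_conv_nth)
    ultimately show ?thesis using prefix[of i] assms(3) footprint by auto
  qed
qed

lemma legal_sequence_length_le_card:
  assumes "graph V E" "legal_sequence V E S"
  shows "length S \<le> card V"
  using assms by (metis card_mono distinct_card graph_def legal_sequence_def)

lemma legal_sequence_extends_to_total_dominating_sequence:
  assumes g: "graph V E" and ni: "no_isolated V E" and "legal_sequence V E S"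
  shows "\<exists>T. total_dominating_sequence V E T \<and> length S \<le> length T"
  using assms(3)
proof (induction "card V - length S" arbitrary: S rule: less_induct)
  case less
  show ?case
  proof (cases "total_dominating_set V E (set S)")
    case True
    with less.prems show ?thesis by (auto simp: total_dominating_sequence_def)
  next
    case False
    then obtain w where w: "w \<in> V" "\<forall>d\<in>set S. \<not> E w d"
      using less.prems by (auto simp: total_dominating_set_def legal_sequence_def)
    obtain y where "E w y" using ni w(1) by (auto simp: no_isolated_def)
    with g w have "y \<in> V" "w \<in> nbhd E y" "w \<notin> (\<Union>x\<in>set S. nbhd E x)"
      by (auto simp: graph_def nbhd_def)
    then have longer: "legal_sequence V E (S @ [y])"
      by (intro legal_sequence_snoc[OF less.prems])
    then have "length (S @ [y]) \<le> card V"
      by (rule legal_sequence_length_le_card[OF g])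
    then have "card V - length (S @ [y]) < card V - length S"
      by simp
    from less.hyps[OF this longer] show ?thesis by auto
  qed
qed

lemma total_dominating_sequence_length_le_grundy:
  assumes "graph V E" "total_dominating_sequence V E T"
  shows "length T \<le> grundy_total_domination_number V E"
proof -
  have "length S \<le> card V" if "total_dominating_sequence V E S" for S
    using that legal_sequence_length_le_card[OF assms(1)]
    by (simp add: total_dominating_sequence_def)
  then show ?thesis
    unfolding grundy_total_domination_number_def
    by (intro Greatest_le_nat[where b = "card V"]) (use assms(2) in auto)
qed

lemma total_domination_number_le:
  "total_dominating_set V E D \<Longrightarrow> total_domination_number V E \<le> card D"
  unfolding total_domination_number_def by (rule Least_le) blast

lemma total_domination_number_attained:
  assumes "graph V E" "no_isolated V E"
  obtains D where "total_dominating_set V E D" "card D = total_domination_number V E"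
proof -
  have "total_dominating_set V E V"
    using assms unfolding total_dominating_set_def no_isolated_def graph_def by blast
  then show ?thesis
    using that LeastI[of "\<lambda>k. \<exists>D. total_dominating_set V E D \<and> card D = k"]
    unfolding total_domination_number_def by blast
qed

lemma legal_sequence_of_length_4:
  assumes g: "graph V E" and ni: "no_isolated V E"
    and dom: "total_dominating_set V E {a, b, c}"
    and no_pair: "\<And>D. total_dominating_set V E D \<Longrightarrow> card D \<noteq> 2"
  shows "\<exists>S. legal_sequence V E S \<and> length S = 4"
proof -
  have sym: "\<And>u v. E u v \<Longrightarrow> E v u" and irr: "\<And>v. \<not> E v v"
    and inV: "\<And>u v. E u v \<Longrightarrow> u \<in> V \<and> v \<in> V" using g by (auto simp: graph_def)
  have abc: "a \<in> V" "b \<in> V" "c \<in> V" and adj: "\<And>v. v \<in> V \<Longrightarrow> E v a \<or> E v b \<or> E v c"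
    using dom by (auto simp: total_dominating_set_def)
  have "b \<noteq> c" \<comment> \<open>otherwise a set of at most two vertices would be total dominating;
    a singleton never is, since \<open>E\<close> is irreflexive\<close>
    using no_pair[of "{a, b, c}"] dom irr by (cases "a = b") (auto simp: total_dominating_set_def)
  then have "\<not> total_dominating_set V E {b, c}" using no_pair[of "{b, c}"] by auto
  then obtain q where q: "q \<in> V" "\<not> E q b" "\<not> E q c"
    using abc by (auto simp: total_dominating_set_def)
  have qa: "E q a" using adj[OF q(1)] q by auto
  then have "a \<noteq> q" using irr by auto
  then have "\<not> total_dominating_set V E {a, q}" using no_pair[of "{a, q}"] by auto
  then obtain r where r: "r \<in> V" "\<not> E r a" "\<not> E r q"
    using abc q by (auto simp: total_dominating_set_def)
  obtain z where z: "E r z" "\<not> E q z" using adj[OF r(1)] r q by auto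
  obtain y where y: "E r y" using ni r(1) by (auto simp: no_isolated_def)
  have "legal_sequence V E [q]" using q(1) by (auto simp: legal_sequence_def)
  then have "legal_sequence V E [q, r]"
    using legal_sequence_snoc[of V E "[q]" r z] r z sym by (auto simp: nbhd_def)
  then have "legal_sequence V E [q, r, a]"
    using legal_sequence_snoc[of V E "[q, r]" a q] abc qa r irr sym by (auto simp: nbhd_def)
  then have "legal_sequence V E [q, r, a, y]"
    using legal_sequence_snoc[of V E "[q, r, a]" y r] inV y r irr by (auto simp: nbhd_def dest: sym)
  then show ?thesis by (intro exI[of _ "[q, r, a, y]"]) simp
qed

theorem mainTheorem3:
  fixes V :: "'a set" and E :: "'a \<Rightarrow> 'a \<Rightarrow> bool"
  assumes "graph V E"
    and "no_isolated V E"
    and "total_domination_number V E = 3"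
  shows "grundy_total_domination_number V E > 3"
proof -
  obtain D where D: "total_dominating_set V E D" "card D = 3"
    using total_domination_number_attained[OF assms(1,2)] assms(3) by metis
  then obtain a b c where "D = {a, b, c}" by (auto simp: card_3_iff)
  moreover have "\<And>D'. total_dominating_set V E D' \<Longrightarrow> card D' \<noteq> 2"
    using total_domination_number_le assms(3) by fastforce
  ultimately obtain S where "legal_sequence V E S" "length S = 4"
    using legal_sequence_of_length_4[OF assms(1,2)] D(1) by blast
  then obtain T where "total_dominating_sequence V E T" "4 \<le> length T"
    using legal_sequence_extends_to_total_dominating_sequence[OF assms(1,2)] by fastforce
  then show ?thesis
    using total_dominating_sequence_length_le_grundy[OF assms(1)] by fastforce
qed

end
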